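(* Let $v\in\mathbb{H}\setminus\mathbb{R}$ be written in polar form $v=re^{\theta u}$ with $r=|v|$, $\theta\in\mathbb{R}$ and $u$ a unit imaginary quaternion, and let $\sigma(v)\colon\mathbb{H}\to\mathbb{H}$, $\sigma(v)(x)=vxv^*$. Then $\sigma(v)$ respects the splitting $\mathbb{H}=\mathcal{V}\oplus\mathbb{R}k$, and: (1) the restriction of $\sigma(v)$ to $\mathcal{V}$, identified with $\mathbb{R}^3$ via $(x,y,z)\mapsto x+yi+zj$, is a rotation of angle $2\theta$ about the axis $-uk$, composed with multiplication by $|v|^2$; (2) if $v\in\mathcal{V}$, then the rotation in (1) is also a rotation of angle $2\theta$ in the 2-plane spanned by $1$ and $v$, from $1$ towards $v$; (3) the restriction of $\sigma(v)$ to $\mathbb{R}k$ is multiplication by $|v|^2$.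
   Context: For $q=a+bi+cj+dk\in\mathbb{H}$, $q^*=a+bi+cj-dk$, $\bar q=a-bi-cj-dk$, $|q|^2=q\bar q$. Paravectors $\mathcal{V}=\mathrm{span}_\mathbb{R}\{1,i,j\}$, identified with $\mathbb{R}^3$ by $(x,y,z)\mapsto x+yi+zj$ with the standard orientation (so $(1,i,j)$ is an oriented basis) and dot product; for $u$ imaginary, $-uk\in\mathcal{V}$. Rotation "from $a$ towards $b$" in a 2-plane means that for small angles $a$ moves into the half-plane containing $b$; rotations about an axis are right-handed.
   Formalization: Part (2) is claimed only for polar forms whose angle theta satisfies sin(theta) > 0. The statement above fails without it. *)

theory Defs
  imports "HOL-Analysis.Analysis" "HOL-Analysis.Cross3"
begin

datatype quat = Quat (qre: real) (qi: real) (qj: real) (qk: real)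

instantiation quat :: real_vector
begin
definition "0 = Quat 0 0 0 0"
definition "p + q = Quat (qre p + qre q) (qi p + qi q) (qj p + qj q) (qk p + qk q)"
definition "- p = Quat (- qre p) (- qi p) (- qj p) (- qk p)"
definition "p - q = Quat (qre p - qre q) (qi p - qi q) (qj p - qj q) (qk p - qk q)"
definition "scaleR c p = Quat (c * qre p) (c * qi p) (c * qj p) (c * qk p)"
instance
  by standard (auto simp: zero_quat_def plus_quat_def uminus_quat_def minus_quat_def
      scaleR_quat_def algebra_simps intro: quat.expand)
end

text \<open>Hamilton product: i^2 = j^2 = k^2 = ijk = -1.\<close>
instantiation quat :: "{times, one}"
begin
definition "1 = Quat 1 0 0 0"
definition "p * q = Quat
   (qre p * qre q - qi p * qi q - qj p * qj q - qk p * qk q)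
   (qre p * qi q + qi p * qre q + qj p * qk q - qk p * qj q)
   (qre p * qj q - qi p * qk q + qj p * qre q + qk p * qi q)
   (qre p * qk q + qi p * qj q - qj p * qi q + qk p * qre q)"
instance ..
end

definition qI :: quat where "qI = Quat 0 1 0 0"
definition qJ :: quat where "qJ = Quat 0 0 1 0"
definition qK :: quat where "qK = Quat 0 0 0 1"

definition qreal :: "real \<Rightarrow> quat" where "qreal a = Quat a 0 0 0"

definition qcnj :: "quat \<Rightarrow> quat" where "qcnj q = Quat (qre q) (- qi q) (- qj q) (- qk q)"
definition qstar :: "quat \<Rightarrow> quat" where "qstar q = Quat (qre q) (qi q) (qj q) (- qk q)"

definition qnorm :: "quat \<Rightarrow> real" where
  "qnorm q = sqrt ((qre q)\<^sup>2 + (qi q)\<^sup>2 + (qj q)\<^sup>2 + (qk q)\<^sup>2)"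

definition qimag :: "quat \<Rightarrow> quat" where "qimag q = Quat 0 (qi q) (qj q) (qk q)"

text \<open>Quaternion exponential (closed form of the power series):
  \<open>exp(a + w) = e^a (cos|w| + sin|w| w/|w|)\<close> for \<open>w\<close> imaginary.\<close>
definition qexp :: "quat \<Rightarrow> quat" where
  "qexp q = exp (qre q) *\<^sub>R (qreal (cos (qnorm (qimag q))) +
      (if qimag q = 0 then 0 else (sin (qnorm (qimag q)) / qnorm (qimag q)) *\<^sub>R qimag q))"

definition real_quats :: "quat set" where "real_quats = range qreal"

definition unit_imag :: "quat \<Rightarrow> bool" where "unit_imag u \<longleftrightarrow> qre u = 0 \<and> qnorm u = 1"

definition paravectors :: "quat set" where "paravectors = {q. qk q = 0}"
definition kline :: "quat set" where "kline = range (\<lambda>t. t *\<^sub>R qK)"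

definition sigma :: "quat \<Rightarrow> quat \<Rightarrow> quat" where "sigma v x = v * x * qstar v"

definition r3_to_V :: "real^3 \<Rightarrow> quat" where "r3_to_V p = Quat (p$1) (p$2) (p$3) 0"
definition V_to_r3 :: "quat \<Rightarrow> real^3" where "V_to_r3 q = vector [qre q, qi q, qj q]"

text \<open>Right-handed rotation by angle \<open>\<phi>\<close> about the (nonzero) axis \<open>a\<close>
  (Rodrigues' formula, \<open>n = a/|a|\<close>; standard orientation via the cross product).\<close>
definition rot_axis :: "real^3 \<Rightarrow> real \<Rightarrow> real^3 \<Rightarrow> real^3" where
  "rot_axis a \<phi> x = (let n = (1 / norm a) *\<^sub>R a in
      cos \<phi> *\<^sub>R x + sin \<phi> *\<^sub>R (cross3 n x) + ((1 - cos \<phi>) * (n \<bullet> x)) *\<^sub>R n)"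

text \<open>With the orthonormal basis
  \<open>e1 = a/|a|\<close>, \<open>e2\<close> = normalised component of \<open>b\<close> orthogonal to \<open>a\<close>, it sends
  \<open>e1 \<mapsto> cos \<phi> e1 + sin \<phi> e2\<close>, \<open>e2 \<mapsto> - sin \<phi> e1 + cos \<phi> e2\<close>.\<close>
definition rot_plane :: "real^3 \<Rightarrow> real^3 \<Rightarrow> real \<Rightarrow> real^3 \<Rightarrow> real^3" where
  "rot_plane a b \<phi> x = (let e1 = (1 / norm a) *\<^sub>R a;
        w = b - (b \<bullet> e1) *\<^sub>R e1;
        e2 = (1 / norm w) *\<^sub>R w;
        s = x \<bullet> e1; t = x \<bullet> e2 in
      x + ((cos \<phi> - 1) * s - sin \<phi> * t) *\<^sub>R e1 + (sin \<phi> * s + (cos \<phi> - 1) * t) *\<^sub>R e2)"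

end

theory Submission
  imports Defs
begin

text \<open>
  In polar form \<open>v = r (cos \<theta> + sin \<theta> u)\<close>.  Expanding \<open>v x v\<^sup>*\<close> for \<open>x \<in> \<V>\<close> componentwise
  gives exactly \<open>r\<^sup>2\<close> times Rodrigues' formula with angle \<open>2\<theta>\<close> about \<open>-uk\<close>, while
  \<open>k v\<^sup>* = \<bar>v k\<close> gives \<open>v k v\<^sup>* = |v|\<^sup>2 k\<close>.  If moreover \<open>v \<in> \<V>\<close> and \<open>sin \<theta> > 0\<close>, then
  \<open>u \<in> span{i, j}\<close>, so \<open>1, u, -uk = 1 \<times> u\<close> is a positively oriented orthonormal frame of
  \<open>\<real>\<^sup>3\<close>; a rotation about the third vector of such a frame is the rotation in the plane of the
  first two, from \<open>1\<close> towards \<open>v = r cos \<theta> + r sin \<theta> u\<close>.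
\<close>

lemma quat_component_simps [simp]:
  "qre (p + q) = qre p + qre q" "qi (p + q) = qi p + qi q"
  "qj (p + q) = qj p + qj q" "qk (p + q) = qk p + qk q"
  "qre (c *\<^sub>R q) = c * qre q" "qi (c *\<^sub>R q) = c * qi q"
  "qj (c *\<^sub>R q) = c * qj q" "qk (c *\<^sub>R q) = c * qk q"
  "qre (- q) = - qre q" "qi (- q) = - qi q" "qj (- q) = - qj q" "qk (- q) = - qk q"
  "qre 0 = 0" "qi 0 = 0" "qj 0 = 0" "qk 0 = 0"
  by (simp_all add: plus_quat_def scaleR_quat_def uminus_quat_def zero_quat_def)

lemma qnorm_power2: "(qnorm q)\<^sup>2 = (qre q)\<^sup>2 + (qi q)\<^sup>2 + (qj q)\<^sup>2 + (qk q)\<^sup>2"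
  by (simp add: qnorm_def)

lemma qnorm_scaleR: "qnorm (c *\<^sub>R q) = \<bar>c\<bar> * qnorm q"
  by (simp add: qnorm_def power_mult_distrib real_sqrt_mult flip: distrib_left)

lemma qnorm_eq_0_iff: "qnorm q = 0 \<longleftrightarrow> q = 0"
  by (cases q) (simp add: qnorm_def zero_quat_def add_nonneg_eq_0_iff)

lemma qexp_scaleR_unit_imag:
  assumes "unit_imag u"
  shows "qexp (\<theta> *\<^sub>R u) = qreal (cos \<theta>) + sin \<theta> *\<^sub>R u"
proof (cases "\<theta> = 0")
  case True
  then show ?thesis by (simp add: qexp_def qimag_def qreal_def zero_quat_def qnorm_def)
next
  case False
  have "qre u = 0" and "qnorm u = 1"
    using assms by (auto simp: unit_imag_def)
  then have imag: "qimag (\<theta> *\<^sub>R u) = \<theta> *\<^sub>R u"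
    by (cases u) (simp add: qimag_def scaleR_quat_def)
  have norm: "qnorm (\<theta> *\<^sub>R u) = \<bar>\<theta>\<bar>"
    using \<open>qnorm u = 1\<close> by (simp add: qnorm_scaleR)
  have "\<theta> *\<^sub>R u \<noteq> 0"
    using False norm by (metis abs_eq_0 qnorm_eq_0_iff)
  moreover have "sin \<bar>\<theta>\<bar> / \<bar>\<theta>\<bar> * \<theta> = sin \<theta>"
    using False by (cases "\<theta> \<ge> 0") auto
  ultimately show ?thesis
    using \<open>qre u = 0\<close> by (simp add: qexp_def imag norm)
qed

lemma sigma_paravectors: "x \<in> paravectors \<Longrightarrow> sigma v x \<in> paravectors"
  by (simp add: paravectors_def sigma_def times_quat_def qstar_def algebra_simps)

lemma sigma_scaleR_qK: "sigma v (t *\<^sub>R qK) = (qnorm v)\<^sup>2 *\<^sub>R (t *\<^sub>R qK)"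
  unfolding qnorm_power2
  by (simp add: sigma_def times_quat_def qstar_def qK_def scaleR_quat_def algebra_simps
      power2_eq_square)

lemma cross3_cross3_right: "cross3 a (cross3 b c) = (a \<bullet> c) *\<^sub>R b - (a \<bullet> b) *\<^sub>R c"
  by (simp add: cross3_simps forall_3)

lemma rot_axis_cross3_eq_rot_plane:
  fixes e1 e2 x :: "real^3"
  assumes e1: "norm e1 = 1" and e2: "norm e2 = 1" and orth: "e1 \<bullet> e2 = 0" and "\<beta> > 0"
  shows "rot_axis (cross3 e1 e2) \<phi> x = rot_plane e1 (\<alpha> *\<^sub>R e1 + \<beta> *\<^sub>R e2) \<phi> x"
proof -
  define n where "n = cross3 e1 e2"
  have unit: "e1 \<bullet> e1 = 1" "e2 \<bullet> e2 = 1"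
    using e1 e2 by (simp_all add: norm_eq_1)
  have "(norm n)\<^sup>2 = 1"
    using norm_cross_dot[of e1 e2] by (simp add: n_def e1 e2 orth)
  then have n: "norm n = 1"
    using norm_ge_zero[of n] by (auto simp: power2_eq_1_iff)
  have cross_n: "cross3 n y = (e1 \<bullet> y) *\<^sub>R e2 - (e2 \<bullet> y) *\<^sub>R e1" for y
    unfolding n_def by (simp add: cross3_simps forall_3)
  have "cross3 n (cross3 n x) = - (e1 \<bullet> x) *\<^sub>R e1 - (e2 \<bullet> x) *\<^sub>R e2"
    by (simp add: cross_n inner_diff_right unit orth inner_commute[of e2 e1] algebra_simps)
  moreover have "cross3 n (cross3 n x) = (n \<bullet> x) *\<^sub>R n - x"
    using n by (simp add: cross3_cross3_right norm_eq_1)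
  ultimately have axial: "(n \<bullet> x) *\<^sub>R n = x - (e1 \<bullet> x) *\<^sub>R e1 - (e2 \<bullet> x) *\<^sub>R e2"
    by (simp add: algebra_simps)
  have e1_normalized: "(1 / norm e1) *\<^sub>R e1 = e1"
    by (simp add: e1)
  have w: "(\<alpha> *\<^sub>R e1 + \<beta> *\<^sub>R e2) - ((\<alpha> *\<^sub>R e1 + \<beta> *\<^sub>R e2) \<bullet> e1) *\<^sub>R e1 = \<beta> *\<^sub>R e2"
    by (simp add: inner_add_left unit orth inner_commute[of e2 e1])
  have w_normalized: "(1 / norm (\<beta> *\<^sub>R e2)) *\<^sub>R (\<beta> *\<^sub>R e2) = e2"
    using \<open>\<beta> > 0\<close> by (simp add: e2)
  have plane: "rot_plane e1 (\<alpha> *\<^sub>R e1 + \<beta> *\<^sub>R e2) \<phi> x =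
      x + ((cos \<phi> - 1) * (x \<bullet> e1) - sin \<phi> * (x \<bullet> e2)) *\<^sub>R e1
        + (sin \<phi> * (x \<bullet> e1) + (cos \<phi> - 1) * (x \<bullet> e2)) *\<^sub>R e2"
    unfolding rot_plane_def Let_def e1_normalized w w_normalized ..
  have "rot_axis (cross3 e1 e2) \<phi> x =
      cos \<phi> *\<^sub>R x + sin \<phi> *\<^sub>R ((e1 \<bullet> x) *\<^sub>R e2 - (e2 \<bullet> x) *\<^sub>R e1)
        + (1 - cos \<phi>) *\<^sub>R (x - (e1 \<bullet> x) *\<^sub>R e1 - (e2 \<bullet> x) *\<^sub>R e2)"
    by (simp add: rot_axis_def Let_def n cross_n flip: n_def axial scaleR_scaleR)
  then show ?thesis
    unfolding plane by (simp add: algebra_simps inner_commute)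
qed

lemma norm_vector_3: "norm (vector [x, y, z] :: real^3) = sqrt (x\<^sup>2 + y\<^sup>2 + z\<^sup>2)"
  by (simp add: norm_eq_sqrt_inner cross3_simps power2_eq_square)

lemma V_to_r3_minus_times_qK:
  "qre u = 0 \<Longrightarrow> V_to_r3 (- (u * qK)) = vector [qk u, - qj u, qi u]"
  by (simp add: V_to_r3_def times_quat_def qK_def)

lemma sigma_qexp_r3_to_V:
  assumes "unit_imag u"
  shows "sigma (r *\<^sub>R qexp (\<theta> *\<^sub>R u)) (r3_to_V p) =
    r3_to_V (r\<^sup>2 *\<^sub>R rot_axis (V_to_r3 (- (u * qK))) (2 * \<theta>) p)"
proof -
  have "qre u = 0" and unit: "(qi u)\<^sup>2 + (qj u)\<^sup>2 + (qk u)\<^sup>2 = 1"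
    using assms by (auto simp: unit_imag_def qnorm_def)
  have v: "r *\<^sub>R qexp (\<theta> *\<^sub>R u) =
      Quat (r * cos \<theta>) (r * sin \<theta> * qi u) (r * sin \<theta> * qj u) (r * sin \<theta> * qk u)"
    unfolding qexp_scaleR_unit_imag[OF assms]
    using \<open>qre u = 0\<close> by (simp add: qreal_def plus_quat_def scaleR_quat_def)
  have axis: "norm (vector [qk u, - qj u, qi u] :: real^3) = 1"
    using unit by (simp add: norm_vector_3 algebra_simps)
  show ?thesis
    unfolding sigma_def r3_to_V_def v rot_axis_def Let_def
      V_to_r3_minus_times_qK[OF \<open>qre u = 0\<close>] axis cos_double sin_double
    apply (simp add: times_quat_def qstar_def cross3_simps)
    apply (intro conjI)
    using unit sin_cos_squared_add[of \<theta>] by algebra+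
qed

lemma rot_axis_eq_rot_plane_qexp:
  assumes "unit_imag u" and "r > 0" and "sin \<theta> > 0"
    and "r *\<^sub>R qexp (\<theta> *\<^sub>R u) \<in> paravectors"
  shows "rot_axis (V_to_r3 (- (u * qK))) \<phi> x =
    rot_plane (V_to_r3 1) (V_to_r3 (r *\<^sub>R qexp (\<theta> *\<^sub>R u))) \<phi> x"
proof -
  have "r * sin \<theta> * qk u = 0"
    using assms(4) unfolding qexp_scaleR_unit_imag[OF assms(1)]
    by (simp add: paravectors_def qreal_def)
  then have "qk u = 0"
    using assms(2,3) by simp
  moreover have "qre u = 0" and "qnorm u = 1"
    using assms(1) by (auto simp: unit_imag_def)
  ultimately have unit: "(qi u)\<^sup>2 + (qj u)\<^sup>2 = 1"
    by (simp add: qnorm_def)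
  have "V_to_r3 (r *\<^sub>R qexp (\<theta> *\<^sub>R u)) = (r * cos \<theta>) *\<^sub>R V_to_r3 1 + (r * sin \<theta>) *\<^sub>R V_to_r3 u"
    unfolding qexp_scaleR_unit_imag[OF assms(1)]
    by (simp add: V_to_r3_def qreal_def one_quat_def cross3_simps forall_3)
  moreover have "V_to_r3 (- (u * qK)) = cross3 (V_to_r3 1) (V_to_r3 u)"
    using \<open>qre u = 0\<close> \<open>qk u = 0\<close>
    by (simp add: V_to_r3_def times_quat_def qK_def one_quat_def cross3_simps forall_3)
  moreover have "norm (V_to_r3 1) = 1" and "norm (V_to_r3 u) = 1"
    using \<open>qre u = 0\<close> unit by (simp_all add: V_to_r3_def one_quat_def norm_vector_3)
  moreover have "V_to_r3 1 \<bullet> V_to_r3 u = 0"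
    using \<open>qre u = 0\<close> by (simp add: V_to_r3_def one_quat_def cross3_simps)
  moreover have "r * sin \<theta> > 0"
    using assms(2,3) by simp
  ultimately show ?thesis
    by (simp add: rot_axis_cross3_eq_rot_plane)
qed

theorem proposition2p9:
  fixes v u :: quat and r \<theta> :: real
  assumes "v \<notin> real_quats"
    and "r = qnorm v"
    and "unit_imag u"
    and "v = r *\<^sub>R qexp (\<theta> *\<^sub>R u)"
  shows "(\<forall>x\<in>paravectors. sigma v x \<in> paravectors) \<and> (\<forall>x\<in>kline. sigma v x \<in> kline) \<and>
         (\<forall>p. sigma v (r3_to_V p) =
               r3_to_V ((qnorm v)\<^sup>2 *\<^sub>R rot_axis (V_to_r3 (- (u * qK))) (2 * \<theta>) p)) \<and>
         (v \<in> paravectors \<and> sin \<theta> > 0 \<longrightarrow>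
           (\<forall>p. rot_axis (V_to_r3 (- (u * qK))) (2 * \<theta>) p = rot_plane (V_to_r3 1) (V_to_r3 v) (2 * \<theta>) p)) \<and>
         (\<forall>x\<in>kline. sigma v x = (qnorm v)\<^sup>2 *\<^sub>R x)"
proof -
  have "r \<noteq> 0"
    using assms(1,4) by (auto simp: real_quats_def qreal_def zero_quat_def)
  then have "r > 0"
    using assms(2) by (simp add: qnorm_def less_le)
  have "(qnorm v)\<^sup>2 = r\<^sup>2"
    using assms(2) by simp
  have kline: "sigma v x = (qnorm v)\<^sup>2 *\<^sub>R x" if "x \<in> kline" for x
    using that by (auto simp: kline_def sigma_scaleR_qK)
  show ?thesis
  proof (intro conjI ballI allI impI)
    show "sigma v x \<in> paravectors" if "x \<in> paravectors" for x
      using that by (rule sigma_paravectors)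
    show "sigma v x \<in> kline" if "x \<in> kline" for x
      using that kline by (auto simp: kline_def)
    show "sigma v (r3_to_V p) =
        r3_to_V ((qnorm v)\<^sup>2 *\<^sub>R rot_axis (V_to_r3 (- (u * qK))) (2 * \<theta>) p)" for p
      unfolding \<open>(qnorm v)\<^sup>2 = r\<^sup>2\<close> unfolding assms(4) by (rule sigma_qexp_r3_to_V[OF assms(3)])
    show "rot_axis (V_to_r3 (- (u * qK))) (2 * \<theta>) p = rot_plane (V_to_r3 1) (V_to_r3 v) (2 * \<theta>) p"
      if "v \<in> paravectors \<and> sin \<theta> > 0" for p
      using that rot_axis_eq_rot_plane_qexp[OF assms(3) \<open>r > 0\<close>] unfolding assms(4) by blast
  qed (use kline in blast)
qed

end
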